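(* Let $\mathbf{x}_1,\dots,\mathbf{x}_n\in\mathbb{R}^d$ with $\|\mathbf{x}_i\|\le1$, $f(\mathbf{x};\mathbf{w})=\frac1{\sqrt m}\sum_{s=1}^m a_s\phi(\mathbf{x}^\top\mathbf{w}^{(s)})$ with $\phi(z)=\max\{z,0\}$, $\phi'(0):=0$, $a_s\in\{\pm1\}$, $f_i(\mathbf{w})=f(\mathbf{x}_i;\mathbf{w})$, and $\mathbf{w}_0\sim\mathcal{N}(0,I_{md})$. Fix $R>0$, $\delta\in(0,1)$, let $\mathcal{B}=\{\mathbf{w}:\|\mathbf{w}-\mathbf{w}_0\|\le R\}$ and $\xi_i(\mathbf{w},\mathbf{v}):=f_i(\mathbf{w})-f_i(\mathbf{v})-\langle\nabla f_i(\mathbf{v}),\mathbf{w}-\mathbf{v}\rangle$. Then with probability at least $1-\delta$, for all $\mathbf{w},\mathbf{v}\in\mathcal{B}$, \[\max_i|\xi_i(\mathbf{w},\mathbf{v})|\le\frac{3R^{1/3}+\ln^{1/4}(n/\delta)}{m^{1/6}}\|\mathbf{w}-\mathbf{v}\|,\qquad\max_i\|\nabla f_i(\mathbf{w})-\nabla f_i(\mathbf{v})\|\le\frac{3R^{1/3}+\ln^{1/4}(n/\delta)}{m^{1/6}}.\]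
   Context: $\nabla f_i(\mathbf{w})$ denotes the vector whose $s$-th block is $\frac{a_s}{\sqrt m}\phi'(\mathbf{x}_i^\top\mathbf{w}^{(s)})\mathbf{x}_i$. *)

theory Defs
  imports "HOL-Analysis.Analysis" "HOL-Probability.Probability"
begin

text \<open>Weights w in R^(m d) are represented as w :: real^'d^'m; the s-th block is w $ s.
  The norm on real^'d^'m is the Euclidean norm of R^(m d).\<close>

definition relu :: "real \<Rightarrow> real" where
  "relu z = max z 0"

definition relu' :: "real \<Rightarrow> real" where
  "relu' z = (if z > 0 then 1 else 0)"

definition net :: "('m::finite \<Rightarrow> real) \<Rightarrow> real^'d \<Rightarrow> real^'d^'m \<Rightarrow> real" where
  "net a x w = (1 / sqrt (real CARD('m))) * (\<Sum>s\<in>UNIV. a s * relu (x \<bullet> (w $ s)))"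

definition net_grad :: "('m::finite \<Rightarrow> real) \<Rightarrow> real^'d \<Rightarrow> real^'d^'m \<Rightarrow> real^'d^'m" where
  "net_grad a x w = (\<chi> s. ((a s / sqrt (real CARD('m))) * relu' (x \<bullet> (w $ s))) *\<^sub>R x)"

definition lin_err :: "('m::finite \<Rightarrow> real) \<Rightarrow> real^'d \<Rightarrow> real^'d^'m \<Rightarrow> real^'d^'m \<Rightarrow> real" where
  "lin_err a x w v = net a x w - net a x v - net_grad a x v \<bullet> (w - v)"

definition gauss_init :: "(real^'d^'m) measure" where
  "gauss_init = density lborel
     (\<lambda>w. ennreal (\<Prod>s\<in>UNIV. \<Prod>j\<in>UNIV. std_normal_density (w $ s $ j)))"

end

theory Submission
  imports Defs
begin

text \<open>Fix an input \<open>x\<close> and a threshold \<open>\<tau>\<close>. The ReLU activation pattern at \<open>w\<close> and at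
  \<open>v\<close> can differ on neuron \<open>s\<close> only if \<open>x \<bullet> w0$s\<close> lies within \<open>\<tau> * norm x\<close> of the kink, or
  one of the blocks \<open>w$s\<close>, \<open>v$s\<close> is farther than \<open>\<tau>\<close> from \<open>w0$s\<close>; since the squared block
  distances sum to at most \<open>R\<^sup>2\<close>, at most \<open>2 R\<^sup>2 / \<tau>\<^sup>2\<close> neurons are of the second kind.
  Under the Gaussian initialisation the \<open>x \<bullet> w0$s\<close> are independent normals of standard
  deviation \<open>norm x\<close>, so the neurons of the first kind are counted by a sum of \<open>m\<close> independent
  indicators of mean at most \<open>\<tau>\<close>. Hoeffding's inequality and a union bound over the \<open>n\<close>
  inputs keep this count below \<open>m \<tau> + sqrt (m ln (n / \<delta>) / 2)\<close> for all inputs with probability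
  at least \<open>1 - \<delta>\<close>. As ReLU is affine away from its kink, both the gradient difference and the
  linearisation error are bounded by \<open>sqrt (#flips / m)\<close>, and \<open>\<tau> = R powr (2/3) / m powr (1/3)\<close>
  balances the two counts.\<close>

section \<open>Product measures on finite Cartesian powers\<close>

lemma measurable_vec_lambda_PiM[measurable]:
  "(vec_lambda :: ('n::finite \<Rightarrow> 'a::euclidean_space) \<Rightarrow> 'a^'n) \<in> PiM UNIV (\<lambda>_. borel) \<rightarrow>\<^sub>M borel"
proof (subst borel_measurable_euclidean_space, intro ballI)
  fix b :: "'a^'n" assume "b \<in> Basis"
  then obtain i u where b: "b = axis i u" "u \<in> Basis" by (auto simp: Basis_vec_def)
  have "(\<lambda>f::'n\<Rightarrow>'a. vec_lambda f \<bullet> b) = (\<lambda>f. f i \<bullet> u)"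
    by (auto simp: b inner_axis)
  then show "(\<lambda>f::'n\<Rightarrow>'a. vec_lambda f \<bullet> b) \<in> borel_measurable (PiM UNIV (\<lambda>_. borel))"
    by simp
qed

lemma borel_measurable_sets_eq_borel:
  assumes "sets M = sets borel" "f \<in> borel_measurable borel"
  shows "f \<in> borel_measurable M"
  using assms measurable_cong_sets[of M borel borel borel] by simp

lemma measurable_vec_lambda_PiM_sets_borel:
  assumes "sets Q = sets (borel::'a::euclidean_space measure)"
  shows "(vec_lambda :: ('n::finite \<Rightarrow> 'a) \<Rightarrow> 'a^'n) \<in> PiM UNIV (\<lambda>_. Q) \<rightarrow>\<^sub>M borel"
proof -
  have "sets (PiM UNIV (\<lambda>_::'n. Q)) = sets (PiM UNIV (\<lambda>_. borel))"
    by (rule sets_PiM_cong) (simp_all add: assms)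
  then show ?thesis
    using measurable_cong_sets measurable_vec_lambda_PiM by blast
qed

lemma prod_Basis_vec:
  fixes g :: "'a::euclidean_space^'n::finite \<Rightarrow> 'b::comm_monoid_mult"
  shows "(\<Prod>b\<in>Basis. g b) = (\<Prod>i\<in>UNIV. \<Prod>u\<in>Basis. g (axis i u))"
proof -
  have "(Basis::('a^'n) set) = (\<Union>i. (\<lambda>u. axis i u) ` Basis)"
    by (auto simp: Basis_vec_def)
  then have "(\<Prod>b\<in>Basis. g b) = (\<Prod>b\<in>(\<Union>i. (\<lambda>u. axis i u) ` Basis). g b)"
    by simp
  also have "\<dots> = (\<Prod>i\<in>UNIV. \<Prod>b\<in>(\<lambda>u. axis i u) ` Basis. g b)"
    by (rule prod.UNION_disjoint) (auto simp: axis_eq_axis)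
  also have "\<dots> = (\<Prod>i\<in>UNIV. \<Prod>u\<in>Basis. g (axis i u))"
    by (intro prod.cong refl, subst prod.reindex) (auto simp: inj_on_def axis_eq_axis)
  finally show ?thesis .
qed

lemma mem_box_vec:
  fixes x l u :: "'a::euclidean_space^'n::finite"
  shows "x \<in> box l u \<longleftrightarrow> (\<forall>i. x$i \<in> box (l$i) (u$i))"
  unfolding mem_box Basis_vec_def by (auto simp: inner_axis)

lemma lborel_vec_eq_distr_PiM:
  "(lborel :: ('a::euclidean_space^'n::finite) measure) = distr (PiM UNIV (\<lambda>_. lborel)) borel vec_lambda"
proof (rule lborel_eqI)
  fix l u :: "'a^'n" assume le: "\<And>b. b \<in> Basis \<Longrightarrow> l \<bullet> b \<le> u \<bullet> b"
  have le': "l$i \<bullet> b \<le> u$i \<bullet> b" if "b \<in> Basis" for i b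
    using le[of "axis i b"] that by (simp add: inner_axis)
  interpret product_sigma_finite "\<lambda>_::'n. (lborel::'a measure)" by standard
  have meas: "vec_lambda \<in> PiM UNIV (\<lambda>_. lborel) \<rightarrow>\<^sub>M (borel :: ('a^'n) measure)"
    by (rule measurable_vec_lambda_PiM_sets_borel) simp
  have pre: "vec_lambda -` box l u \<inter> space (PiM UNIV (\<lambda>_. lborel)) = PiE UNIV (\<lambda>i. box (l$i) (u$i))"
    by (auto simp: mem_box_vec space_PiM PiE_iff)
  have "emeasure (distr (PiM UNIV (\<lambda>_. lborel)) borel vec_lambda) (box l u)
     = emeasure (PiM UNIV (\<lambda>_. lborel)) (PiE UNIV (\<lambda>i. box (l$i) (u$i)))"
    by (subst emeasure_distr[OF meas]) (simp_all add: pre)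
  also have "\<dots> = (\<Prod>i\<in>UNIV. emeasure lborel (box (l$i) (u$i)))"
    by (rule emeasure_PiM) auto
  also have "\<dots> = (\<Prod>i\<in>UNIV. \<Prod>b\<in>Basis. ennreal ((u$i - l$i) \<bullet> b))"
    using le' by (simp add: emeasure_lborel_box inner_diff_left prod_ennreal)
  also have "\<dots> = (\<Prod>b\<in>Basis. ennreal ((u - l) \<bullet> b))"
    by (subst prod_Basis_vec) (simp add: inner_axis)
  also have "\<dots> = ennreal (\<Prod>b\<in>Basis. (u - l) \<bullet> b)"
    using le by (subst prod_ennreal) (auto simp: inner_diff_left)
  finally show "emeasure (distr (PiM UNIV (\<lambda>_. lborel)) borel vec_lambda) (box l u)
      = (\<Prod>b\<in>Basis. (u - l) \<bullet> b)" .
qed simp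

lemma density_PiM_prod_eq_PiM_density:
  fixes g :: "'a::euclidean_space \<Rightarrow> real" and I :: "'i set"
  assumes g[measurable]: "g \<in> borel_measurable borel" and nonneg: "\<And>x. 0 \<le> g x"
    and prob: "prob_space (density lborel g)" and "finite I"
  shows "density (PiM I (\<lambda>_. lborel)) (\<lambda>f. ennreal (\<Prod>i\<in>I. g (f i)))
       = PiM I (\<lambda>_. density lborel g)"
proof -
  interpret L: product_sigma_finite "\<lambda>_::'i. (lborel::'a measure)" by standard
  interpret G: product_prob_space "\<lambda>_::'i. density lborel g"
    by (rule product_prob_spaceI) (use prob in auto)
  show ?thesis
  proof (rule G.PiM_eqI[OF \<open>finite I\<close>])
    show "sets (density (PiM I (\<lambda>_. lborel)) (\<lambda>f. ennreal (\<Prod>i\<in>I. g (f i))))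
        = sets (PiM I (\<lambda>_. density lborel g))"
      by (simp only: sets_density) (rule sets_PiM_cong; simp)
  next
    fix A assume "\<And>i. i \<in> I \<Longrightarrow> A i \<in> sets (density lborel g)"
    then have A: "\<And>i. i \<in> I \<Longrightarrow> A i \<in> sets borel" by simp
    have "indicator (PiE I A) f = (\<Prod>i\<in>I. indicator (A i) (f i) :: ennreal)"
      if "f \<in> extensional I" for f
      using that \<open>finite I\<close> by (auto simp: PiE_iff indicator_def intro: prod_zero)
    then have "emeasure (density (PiM I (\<lambda>_. lborel)) (\<lambda>f. ennreal (\<Prod>i\<in>I. g (f i)))) (PiE I A)
        = (\<integral>\<^sup>+f. (\<Prod>i\<in>I. ennreal (g (f i)) * indicator (A i) (f i)) \<partial>PiM I (\<lambda>_. lborel))"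
      using A \<open>finite I\<close> nonneg
      by (subst emeasure_density) (auto intro!: nn_integral_cong sets_PiM_I_finite
            simp: space_PiM PiE_def prod.distrib prod_ennreal)
    also have "\<dots> = (\<Prod>i\<in>I. \<integral>\<^sup>+x. ennreal (g x) * indicator (A i) x \<partial>lborel)"
      using A by (intro L.product_nn_integral_prod \<open>finite I\<close>) auto
    also have "\<dots> = (\<Prod>i\<in>I. emeasure (density lborel g) (A i))"
      using A by (intro prod.cong refl) (simp add: emeasure_density)
    finally show "emeasure (density (PiM I (\<lambda>_. lborel)) (\<lambda>f. ennreal (\<Prod>i\<in>I. g (f i)))) (PiE I A)
        = (\<Prod>i\<in>I. emeasure (density lborel g) (A i))" .
  qed
qed

lemma borel_measurable_vec_nth[measurable]:
  "(\<lambda>v::'a::topological_space^'n::finite. v $ i) \<in> borel_measurable borel"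
  by (intro borel_measurable_continuous_onI continuous_on_component continuous_on_id)

lemma density_vec_prod_eq_distr_PiM:
  fixes g :: "'a::euclidean_space \<Rightarrow> real"
  assumes g[measurable]: "g \<in> borel_measurable borel" and "\<And>x. 0 \<le> g x"
    and "prob_space (density lborel g)"
  shows "density lborel (\<lambda>v::'a^'n::finite. ennreal (\<Prod>i\<in>UNIV. g (v$i)))
       = distr (PiM UNIV (\<lambda>_. density lborel g)) borel vec_lambda"
proof -
  have meas: "(vec_lambda :: ('n \<Rightarrow> 'a) \<Rightarrow> 'a^'n) \<in> PiM UNIV (\<lambda>_. lborel) \<rightarrow>\<^sub>M borel"
    by (rule measurable_vec_lambda_PiM_sets_borel) simp
  have "density lborel (\<lambda>v::'a^'n. ennreal (\<Prod>i\<in>UNIV. g (v$i)))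
      = distr (density (PiM UNIV (\<lambda>_. lborel)) (\<lambda>F. ennreal (\<Prod>i\<in>UNIV. g ((vec_lambda F :: 'a^'n)$i))))
          borel vec_lambda"
    by (subst lborel_vec_eq_distr_PiM, rule density_distr[OF _ meas]) measurable
  also have "\<dots> = distr (PiM UNIV (\<lambda>_. density lborel g)) borel vec_lambda"
    using density_PiM_prod_eq_PiM_density[OF assms, of "UNIV :: 'n set"] by simp
  finally show ?thesis .
qed

lemma distr_vec_lambda_PiM_iid:
  fixes Q :: "'a::euclidean_space measure"
  assumes Q: "prob_space Q" "sets Q = sets borel"
  defines "V \<equiv> distr (PiM UNIV (\<lambda>_::'n::finite. Q)) borel (vec_lambda :: ('n \<Rightarrow> 'a) \<Rightarrow> 'a^'n)"
  shows "prob_space V"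
    and "\<And>i. distr V borel (\<lambda>v. v$i) = Q"
    and "prob_space.indep_vars V (\<lambda>_. borel) (\<lambda>i v. v$i) UNIV"
proof -
  interpret P: product_prob_space "\<lambda>_::'n. Q" UNIV
    by (rule product_prob_spaceI) (use Q in auto)
  have meas: "(vec_lambda :: ('n \<Rightarrow> 'a) \<Rightarrow> 'a^'n) \<in> PiM UNIV (\<lambda>_. Q) \<rightarrow>\<^sub>M borel"
    by (rule measurable_vec_lambda_PiM_sets_borel[OF Q(2)])
  show "prob_space V"
    unfolding V_def by (rule prob_space.prob_space_distr[OF P.prob_space_axioms meas])
  then interpret V: prob_space V .
  have component: "distr V borel (\<lambda>v. v$i) = Q" for i
  proof -
    have "distr V borel (\<lambda>v. v$i) = distr (PiM UNIV (\<lambda>_. Q)) Q (\<lambda>F. F i)"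
      unfolding V_def by (subst distr_distr) (auto simp: meas comp_def Q(2) intro!: distr_cong)
    also have "\<dots> = Q"
      by (rule distr_PiM_component) (simp_all add: Q)
    finally show ?thesis .
  qed
  then show "\<And>i. distr V borel (\<lambda>v. v$i) = Q" .
  show "V.indep_vars (\<lambda>_. borel) (\<lambda>i v. v$i) UNIV"
  proof (subst V.indep_vars_iff_distr_eq_PiM)
    have "distr V (PiM UNIV (\<lambda>_. borel)) (\<lambda>x. \<lambda>i\<in>UNIV. x $ i)
        = distr (PiM UNIV (\<lambda>_::'n. Q)) (PiM UNIV (\<lambda>_. borel)) (\<lambda>F. \<lambda>i\<in>UNIV. (vec_lambda F :: 'a^'n) $ i)"
      unfolding V_def by (subst distr_distr) (auto simp: meas comp_def)
    also have "\<dots> = distr (PiM UNIV (\<lambda>_::'n. Q)) (PiM UNIV (\<lambda>_::'n. Q)) (\<lambda>F. F)"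
      by (rule distr_cong) (auto simp: Q(2) intro!: sets_PiM_cong)
    finally show "distr V (PiM UNIV (\<lambda>_. borel)) (\<lambda>x. \<lambda>i\<in>UNIV. x $ i)
        = PiM UNIV (\<lambda>i. distr V borel (\<lambda>v. v $ i))"
      by (simp add: component distr_id)
  qed (auto intro!: borel_measurable_sets_eq_borel simp: V_def)
qed

section \<open>The Gaussian initialisation\<close>

definition std_gauss :: "(real^'d::finite) measure" where
  "std_gauss = density lborel (\<lambda>v. ennreal (\<Prod>j\<in>UNIV. std_normal_density (v$j)))"

lemma std_gauss_iid:
  shows "prob_space (std_gauss :: (real^'d::finite) measure)"
    and "\<And>j. distr (std_gauss :: (real^'d::finite) measure) borel (\<lambda>v. v$j)
            = density lborel std_normal_density"
    and "prob_space.indep_vars (std_gauss :: (real^'d::finite) measure) (\<lambda>_. borel) (\<lambda>j v. v$j) UNIV"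
proof -
  have N: "prob_space (density lborel std_normal_density)"
    by (rule prob_space_normal_density) simp
  have "(std_gauss :: (real^'d) measure)
      = distr (PiM UNIV (\<lambda>_::'d. density lborel std_normal_density)) borel vec_lambda"
    unfolding std_gauss_def
    by (rule density_vec_prod_eq_distr_PiM) (auto intro: prob_space_normal_density)
  then show "prob_space (std_gauss :: (real^'d) measure)"
    and "\<And>j. distr (std_gauss :: (real^'d) measure) borel (\<lambda>v. v$j) = density lborel std_normal_density"
    and "prob_space.indep_vars (std_gauss :: (real^'d) measure) (\<lambda>_. borel) (\<lambda>j v. v$j) UNIV"
    using distr_vec_lambda_PiM_iid[OF N, where 'n='d] by auto
qed

lemma gauss_init_iid_blocks:
  shows "prob_space (gauss_init :: (real^'d::finite^'m::finite) measure)"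
    and "\<And>s. distr (gauss_init :: (real^'d^'m) measure) borel (\<lambda>w. w$s) = std_gauss"
    and "prob_space.indep_vars (gauss_init :: (real^'d^'m) measure) (\<lambda>_. borel) (\<lambda>s w. w$s) UNIV"
proof -
  have sets_std_gauss: "sets (std_gauss :: (real^'d) measure) = sets borel"
    by (simp add: std_gauss_def)
  have "(gauss_init :: (real^'d^'m) measure)
      = density lborel (\<lambda>w. ennreal (\<Prod>s\<in>UNIV. \<Prod>j\<in>UNIV. std_normal_density (w$s$j)))"
    by (simp add: gauss_init_def)
  also have "\<dots> = distr (PiM UNIV (\<lambda>_::'m. std_gauss)) borel vec_lambda"
    unfolding std_gauss_def
    by (rule density_vec_prod_eq_distr_PiM)
       (auto simp: prod_nonneg std_gauss_def[symmetric] std_gauss_iid)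
  finally show "prob_space (gauss_init :: (real^'d^'m) measure)"
    and "\<And>s. distr (gauss_init :: (real^'d^'m) measure) borel (\<lambda>w. w$s) = std_gauss"
    and "prob_space.indep_vars (gauss_init :: (real^'d^'m) measure) (\<lambda>_. borel) (\<lambda>s w. w$s) UNIV"
    using distr_vec_lambda_PiM_iid[OF std_gauss_iid(1) sets_std_gauss, where 'n='m] by auto
qed

lemma space_gauss_init [simp]: "space gauss_init = UNIV"
  by (simp add: gauss_init_def)

lemma sets_gauss_init: "sets gauss_init = sets borel"
  by (simp add: gauss_init_def)

lemma std_gauss_inner_distributed:
  fixes x :: "real^'d::finite" assumes "x \<noteq> 0"
  shows "distributed std_gauss lborel (\<lambda>v. x \<bullet> v) (\<lambda>t. ennreal (normal_density 0 (norm x) t))"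
proof -
  interpret G: prob_space "std_gauss :: (real^'d) measure" by (rule std_gauss_iid(1))
  have coord: "distributed std_gauss lborel (\<lambda>v::real^'d. v$j) (\<lambda>t. ennreal (std_normal_density t))" for j
  proof -
    have "distr std_gauss lborel (\<lambda>v::real^'d. v$j) = distr std_gauss borel (\<lambda>v::real^'d. v$j)"
      by (rule distr_cong) simp_all
    then show ?thesis
      unfolding distributed_def using std_gauss_iid(2)[of j]
      by (auto intro!: borel_measurable_sets_eq_borel simp: std_gauss_def)
  qed
  define J where "J = {j. x$j \<noteq> 0}"
  have "J \<noteq> {}" using assms unfolding J_def by (auto simp: vec_eq_iff)
  have scaled: "distributed std_gauss lborel (\<lambda>v::real^'d. x$j * v$j)
      (\<lambda>t. ennreal (normal_density 0 \<bar>x$j\<bar> t))" if "j \<in> J" for j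
    using G.normal_density_affine[OF coord[of j], where \<alpha>="x$j" and \<beta>=0] that by (simp add: J_def)
  have "G.indep_vars (\<lambda>_. borel) (\<lambda>j v. (\<lambda>t. x$j * t) (v$j)) UNIV"
    by (rule G.indep_vars_compose2[OF std_gauss_iid(3)]) simp
  then have "G.indep_vars (\<lambda>_. borel) (\<lambda>j v. x$j * v$j) J"
    by (rule G.indep_vars_subset) simp
  then have "distributed std_gauss lborel (\<lambda>v. \<Sum>j\<in>J. x$j * v$j)
      (\<lambda>t. ennreal (normal_density (\<Sum>j\<in>J. 0) (sqrt (\<Sum>j\<in>J. \<bar>x$j\<bar>\<^sup>2)) t))"
    using \<open>J \<noteq> {}\<close> scaled by (intro G.sum_indep_normal) (auto simp: J_def)
  moreover have "(\<Sum>j\<in>J. x$j * v$j) = x \<bullet> v" for v :: "real^'d"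
    unfolding inner_vec_def inner_real_def by (rule sum.mono_neutral_left) (auto simp: J_def)
  moreover have "sqrt (\<Sum>j\<in>J. \<bar>x$j\<bar>\<^sup>2) = norm x"
    unfolding norm_vec_def L2_set_def by (subst sum.mono_neutral_left[of UNIV J]) (auto simp: J_def)
  ultimately show ?thesis by simp
qed

lemma normal_density_le:
  assumes "\<sigma> > 0"
  shows "normal_density \<mu> \<sigma> t \<le> 1 / (\<sigma> * sqrt (2 * pi))"
proof -
  have "normal_density \<mu> \<sigma> t \<le> 1 / sqrt (2 * pi * \<sigma>\<^sup>2) * 1"
    unfolding normal_density_def by (intro mult_left_mono) auto
  also have "sqrt (2 * pi * \<sigma>\<^sup>2) = \<sigma> * sqrt (2 * pi)"
    using assms by (simp add: real_sqrt_mult mult.commute)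
  finally show ?thesis by simp
qed

lemma std_gauss_inner_small:
  fixes x :: "real^'d::finite" assumes "x \<noteq> 0" and "0 \<le> c"
  shows "measure std_gauss {v::real^'d. \<bar>x \<bullet> v\<bar> \<le> c} \<le> 2 * c / (norm x * sqrt (2 * pi))"
proof -
  interpret G: prob_space "std_gauss :: (real^'d) measure" by (rule std_gauss_iid(1))
  have "norm x > 0" using assms by simp
  have "{v::real^'d. \<bar>x \<bullet> v\<bar> \<le> c} = (\<lambda>v. x \<bullet> v) -` {-c..c} \<inter> space std_gauss"
    by (auto simp: std_gauss_def)
  then have "emeasure std_gauss {v::real^'d. \<bar>x \<bullet> v\<bar> \<le> c}
      = (\<integral>\<^sup>+t. ennreal (normal_density 0 (norm x) t) * indicator {-c..c} t \<partial>lborel)"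
    using distributed_emeasure[OF std_gauss_inner_distributed[OF \<open>x \<noteq> 0\<close>]] by simp
  also have "\<dots> \<le> (\<integral>\<^sup>+t. ennreal (1 / (norm x * sqrt (2 * pi))) * indicator {-c..c} t \<partial>lborel)"
    using \<open>norm x > 0\<close>
    by (intro nn_integral_mono mult_right_mono) (auto intro: ennreal_leI normal_density_le)
  also have "\<dots> = ennreal (2 * c / (norm x * sqrt (2 * pi)))"
    using \<open>0 \<le> c\<close> \<open>norm x > 0\<close> by (simp add: nn_integral_cmult_indicator ennreal_mult'[symmetric])
  finally show ?thesis
    using \<open>0 \<le> c\<close> \<open>norm x > 0\<close> by (simp add: G.emeasure_eq_measure)
qed

lemma gauss_init_block_inner_small:
  fixes x :: "real^'d::finite" assumes "x \<noteq> 0" and "0 \<le> c"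
  shows "measure (gauss_init :: (real^'d^'m::finite) measure) {w. \<bar>x \<bullet> w$s\<bar> \<le> c}
     \<le> 2 * c / (norm x * sqrt (2 * pi))"
proof -
  have "measure (gauss_init :: (real^'d^'m) measure) {w. \<bar>x \<bullet> w$s\<bar> \<le> c}
      = measure (distr gauss_init borel (\<lambda>w::real^'d^'m. w$s)) {v. \<bar>x \<bullet> v\<bar> \<le> c}"
    by (subst measure_distr) (auto simp: gauss_init_def vimage_def)
  also have "\<dots> \<le> 2 * c / (norm x * sqrt (2 * pi))"
    using std_gauss_inner_small[OF assms] by (simp add: gauss_init_iid_blocks(2))
  finally show ?thesis .
qed

section \<open>Neurons near the kink\<close>

definition near_boundary :: "real^'d::finite \<Rightarrow> real \<Rightarrow> real^'d^'m::finite \<Rightarrow> 'm set" where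
  "near_boundary x \<tau> w0 = {s. \<bar>x \<bullet> w0$s\<bar> \<le> \<tau> * norm x}"

lemma sets_borel_abs_inner_le [measurable]: "{v. \<bar>x \<bullet> v\<bar> \<le> c} \<in> sets borel"
  by (intro borel_closed closed_Collect_le continuous_intros)

lemma card_near_boundary_eq_sum:
  "real (card (near_boundary x \<tau> w)) = (\<Sum>s\<in>UNIV. indicator {v. \<bar>x \<bullet> v\<bar> \<le> \<tau> * norm x} (w$s))"
  by (simp add: near_boundary_def indicator_def sum.If_cases)

lemma borel_measurable_card_near_boundary:
  "(\<lambda>w::real^'d::finite^'m::finite. real (card (near_boundary x \<tau> w))) \<in> borel_measurable gauss_init"
  unfolding card_near_boundary_eq_sum
  by (rule borel_measurable_sets_eq_borel[OF sets_gauss_init]) measurable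

lemma near_boundary_tail:
  fixes x :: "real^'d::finite"
  assumes "x \<noteq> 0" and "0 \<le> \<tau>" and "0 \<le> \<epsilon>"
  shows "measure (gauss_init :: (real^'d^'m::finite) measure)
     {w. real CARD('m) * \<tau> + \<epsilon> \<le> real (card (near_boundary x \<tau> w))}
     \<le> exp (- 2 * \<epsilon>\<^sup>2 / real CARD('m))"
proof -
  interpret P: prob_space "gauss_init :: (real^'d^'m) measure" by (rule gauss_init_iid_blocks(1))
  define X :: "'m \<Rightarrow> real^'d^'m \<Rightarrow> real" where
    "X = (\<lambda>s w. indicator {v. \<bar>x \<bullet> v\<bar> \<le> \<tau> * norm x} (w$s))"
  have "P.indep_vars (\<lambda>_. borel) X UNIV"
    unfolding X_def by (rule P.indep_vars_compose2[OF gauss_init_iid_blocks(3)]) simp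
  then interpret H: Hoeffding_ineq gauss_init UNIV X "\<lambda>_. 0" "\<lambda>_. 1" "\<Sum>s\<in>UNIV. P.expectation (X s)"
    by unfold_locales (simp_all add: X_def)
  have "P.expectation (X s) \<le> \<tau>" for s
  proof -
    have "X s = indicator {w. \<bar>x \<bullet> w$s\<bar> \<le> \<tau> * norm x}"
      by (auto simp: X_def indicator_def)
    then have "P.expectation (X s) = measure gauss_init {w::real^'d^'m. \<bar>x \<bullet> w$s\<bar> \<le> \<tau> * norm x}"
      by simp
    also have "\<dots> \<le> 2 * (\<tau> * norm x) / (norm x * sqrt (2 * pi))"
      using assms by (intro gauss_init_block_inner_small) auto
    also have "\<dots> = \<tau> * (2 / sqrt (2 * pi))"
      using assms by (simp add: field_simps)
    also have "\<dots> \<le> \<tau>"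
      using assms pi_gt3 by (intro mult_left_le) (auto intro: real_le_rsqrt)
    finally show ?thesis .
  qed
  then have mean: "(\<Sum>s\<in>UNIV. P.expectation (X s)) \<le> real CARD('m) * \<tau>"
    using sum_mono[of UNIV "\<lambda>s. P.expectation (X s)" "\<lambda>_. \<tau>"] by simp
  have "{w. real CARD('m) * \<tau> + \<epsilon> \<le> real (card (near_boundary x \<tau> w))}
      \<subseteq> {w\<in>space gauss_init. (\<Sum>s\<in>UNIV. P.expectation (X s)) + \<epsilon> \<le> (\<Sum>s\<in>UNIV. X s w)}"
    using mean by (auto simp: card_near_boundary_eq_sum X_def)
  then have "measure gauss_init {w::real^'d^'m. real CARD('m) * \<tau> + \<epsilon> \<le> real (card (near_boundary x \<tau> w))}
      \<le> measure gauss_init {w\<in>space gauss_init. (\<Sum>s\<in>UNIV. P.expectation (X s)) + \<epsilon> \<le> (\<Sum>s\<in>UNIV. X s w)}"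
    by (rule P.finite_measure_mono) measurable
  also have "\<dots> \<le> exp (- 2 * \<epsilon>\<^sup>2 / real CARD('m))"
    using H.Hoeffding_ineq_ge[OF \<open>0 \<le> \<epsilon>\<close>] by simp
  finally show ?thesis .
qed

lemma near_boundary_whp:
  fixes x :: "nat \<Rightarrow> real^'d::finite"
  assumes "0 \<le> \<tau>" and "0 \<le> \<epsilon>"
  shows "\<exists>A \<in> sets (gauss_init :: (real^'d^'m::finite) measure).
     measure gauss_init A \<ge> 1 - real n * exp (- 2 * \<epsilon>\<^sup>2 / real CARD('m)) \<and>
     (\<forall>w0\<in>A. \<forall>i<n. x i \<noteq> 0 \<longrightarrow> real (card (near_boundary (x i) \<tau> w0)) < real CARD('m) * \<tau> + \<epsilon>)"
proof -
  interpret P: prob_space "gauss_init :: (real^'d^'m) measure" by (rule gauss_init_iid_blocks(1))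
  define bad where
    "bad i = {w::real^'d^'m. real CARD('m) * \<tau> + \<epsilon> \<le> real (card (near_boundary (x i) \<tau> w))}" for i
  define I where "I = {i. i < n \<and> x i \<noteq> 0}"
  have "finite I" "card I \<le> n"
    using card_mono[of "{..<n}" I] by (auto simp: I_def)
  have bad_sets: "bad i \<in> sets gauss_init" for i
    using measurable_sets[OF borel_measurable_card_near_boundary, of "{real CARD('m) * \<tau> + \<epsilon>..}"]
    by (simp add: bad_def vimage_def)
  have bad_union: "(\<Union>i\<in>I. bad i) \<in> sets gauss_init"
    using bad_sets \<open>finite I\<close> by (intro sets.finite_UN) auto
  have "measure gauss_init (\<Union>i\<in>I. bad i) \<le> (\<Sum>i\<in>I. measure gauss_init (bad i))"
    using bad_sets by (intro P.finite_measure_subadditive_finite \<open>finite I\<close>) auto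
  also have "\<dots> \<le> (\<Sum>i\<in>I. exp (- 2 * \<epsilon>\<^sup>2 / real CARD('m)))"
    unfolding bad_def using assms by (intro sum_mono near_boundary_tail) (auto simp: I_def)
  also have "\<dots> \<le> real n * exp (- 2 * \<epsilon>\<^sup>2 / real CARD('m))"
    using \<open>card I \<le> n\<close> by (simp add: mult_right_mono)
  finally have "measure gauss_init (UNIV - (\<Union>i\<in>I. bad i)) \<ge> 1 - real n * exp (- 2 * \<epsilon>\<^sup>2 / real CARD('m))"
    using P.prob_compl[OF bad_union] by simp
  moreover have "UNIV - (\<Union>i\<in>I. bad i) \<in> sets gauss_init"
    using sets.compl_sets[OF bad_union] by simp
  moreover have "real (card (near_boundary (x i) \<tau> w0)) < real CARD('m) * \<tau> + \<epsilon>"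
    if "w0 \<notin> (\<Union>i\<in>I. bad i)" "i < n" "x i \<noteq> 0" for w0 i
    using that by (auto simp: I_def bad_def)
  ultimately show ?thesis by blast
qed

section \<open>Activation flips\<close>

definition activation_flips :: "real^'d::finite \<Rightarrow> real^'d^'m::finite \<Rightarrow> real^'d^'m \<Rightarrow> 'm set" where
  "activation_flips x w v = {s. relu' (x \<bullet> w$s) \<noteq> relu' (x \<bullet> v$s)}"

lemma activation_flips_zero [simp]: "activation_flips 0 w v = {}"
  by (simp add: activation_flips_def)

lemma relu'_ne_imp_abs_le: "relu' p \<noteq> relu' q \<Longrightarrow> \<bar>q\<bar> \<le> \<bar>p - q\<bar>"
  by (auto simp: relu'_def split: if_splits)

lemma abs_relu_linearization_le:
  "\<bar>relu p - relu q - relu' q * (p - q)\<bar> \<le> (if relu' p \<noteq> relu' q then \<bar>p - q\<bar> else 0)"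
  by (auto simp: relu_def relu'_def)

lemma norm_vec_power2_eq_sum: "(norm (x :: 'a::real_normed_vector^'n::finite))\<^sup>2 = (\<Sum>i\<in>UNIV. (norm (x$i))\<^sup>2)"
  unfolding norm_vec_def L2_set_def by (simp add: sum_nonneg)

lemma sum_norm_vec_le:
  fixes u :: "'a::real_normed_vector^'n::finite"
  shows "(\<Sum>i\<in>S. norm (u$i)) \<le> sqrt (real (card S)) * norm u"
proof -
  have "(\<Sum>i\<in>S. norm (u$i)) \<le> L2_set (\<lambda>_. 1) S * L2_set (\<lambda>i. norm (u$i)) S"
    using L2_set_mult_ineq[of "\<lambda>_. 1" "\<lambda>i. norm (u$i)" S] by simp
  also have "L2_set (\<lambda>i. norm (u$i)) S \<le> norm u"
    unfolding norm_vec_def L2_set_def by (intro real_sqrt_le_mono sum_mono2) auto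
  then have "L2_set (\<lambda>_. 1) S * L2_set (\<lambda>i. norm (u$i)) S \<le> sqrt (real (card S)) * norm u"
    by (simp add: L2_set_constant mult_left_mono)
  finally show ?thesis .
qed

lemma card_far_blocks_le:
  fixes u :: "'a::real_normed_vector^'n::finite"
  assumes "\<tau> > 0" and "norm u \<le> R"
  shows "real (card {s. \<tau> < norm (u$s)}) \<le> R\<^sup>2 / \<tau>\<^sup>2"
proof -
  let ?F = "{s. \<tau> < norm (u$s)}"
  have "real (card ?F) * \<tau>\<^sup>2 = (\<Sum>s\<in>?F. \<tau>\<^sup>2)" by simp
  also have "\<dots> \<le> (\<Sum>s\<in>?F. (norm (u$s))\<^sup>2)"
    using assms by (intro sum_mono power_mono) auto
  also have "\<dots> \<le> (\<Sum>s\<in>UNIV. (norm (u$s))\<^sup>2)"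
    by (intro sum_mono2) auto
  also have "\<dots> \<le> R\<^sup>2"
    using assms by (simp add: norm_vec_power2_eq_sum[symmetric] power_mono)
  finally show ?thesis using assms by (simp add: field_simps)
qed

lemma activation_flips_subset:
  fixes w v w0 :: "real^'d::finite^'m::finite"
  shows "activation_flips x w v
    \<subseteq> near_boundary x \<tau> w0 \<union> {s. \<tau> < norm (w$s - w0$s)} \<union> {s. \<tau> < norm (v$s - w0$s)}"
proof
  fix s assume s: "s \<in> activation_flips x w v"
  have far: "\<tau> < norm (u$s - w0$s)"
    if "relu' (x \<bullet> u$s) \<noteq> relu' (x \<bullet> w0$s)" "s \<notin> near_boundary x \<tau> w0" for u :: "real^'d^'m"
  proof -
    have "norm x * \<tau> < \<bar>x \<bullet> w0$s\<bar>"
      using that(2) by (simp add: near_boundary_def mult.commute)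
    also have "\<dots> \<le> \<bar>x \<bullet> (u$s - w0$s)\<bar>"
      using relu'_ne_imp_abs_le[OF that(1)] by (simp add: inner_diff_right)
    also have "\<dots> \<le> norm x * norm (u$s - w0$s)"
      by (rule Cauchy_Schwarz_ineq2)
    finally show ?thesis
      by (simp add: mult_less_cancel_left)
  qed
  show "s \<in> near_boundary x \<tau> w0 \<union> {s. \<tau> < norm (w$s - w0$s)} \<union> {s. \<tau> < norm (v$s - w0$s)}"
  proof -
    have "relu' (x \<bullet> w$s) \<noteq> relu' (x \<bullet> w0$s) \<or> relu' (x \<bullet> v$s) \<noteq> relu' (x \<bullet> w0$s)"
      using s by (auto simp: activation_flips_def)
    then show ?thesis
      using far[of w] far[of v] by blast
  qed
qed

lemma card_activation_flips_le:
  fixes w w0 v :: "real^'d::finite^'m::finite"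
  assumes "\<tau> > 0" and "dist w w0 \<le> R" and "dist v w0 \<le> R"
  shows "real (card (activation_flips x w v)) \<le> real (card (near_boundary x \<tau> w0)) + 2 * R\<^sup>2 / \<tau>\<^sup>2"
proof -
  have "card (activation_flips x w v)
      \<le> card (near_boundary x \<tau> w0 \<union> {s. \<tau> < norm (w$s - w0$s)} \<union> {s. \<tau> < norm (v$s - w0$s)})"
    by (intro card_mono activation_flips_subset) simp
  also have "\<dots> \<le> card (near_boundary x \<tau> w0) + card {s. \<tau> < norm ((w - w0)$s)} + card {s. \<tau> < norm ((v - w0)$s)}"
    by (simp add: card_Un_le le_trans[OF card_Un_le] add_mono)
  finally show ?thesis
    using card_far_blocks_le[OF \<open>\<tau> > 0\<close>, of "w - w0" R] card_far_blocks_le[OF \<open>\<tau> > 0\<close>, of "v - w0" R] assms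
    by (simp add: dist_norm)
qed

lemma norm_net_grad_diff_le:
  fixes x :: "real^'d::finite" and a :: "'m::finite \<Rightarrow> real" and w v :: "real^'d^'m"
  assumes "\<forall>s. a s = 1 \<or> a s = -1" and "norm x \<le> 1"
  shows "norm (net_grad a x w - net_grad a x v)
    \<le> sqrt (real (card (activation_flips x w v)) / real CARD('m))"
proof -
  let ?F = "activation_flips x w v" and ?m = "real CARD('m)"
  have block: "(norm ((net_grad a x w - net_grad a x v)$s))\<^sup>2 \<le> (if s \<in> ?F then 1 / ?m else 0)" for s
  proof -
    have "(net_grad a x w - net_grad a x v)$s
       = ((a s / sqrt ?m) * (relu' (x \<bullet> w$s) - relu' (x \<bullet> v$s))) *\<^sub>R x"
      by (simp add: net_grad_def algebra_simps)
    moreover have "\<bar>a s\<bar> = 1"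
      using assms(1) by (metis abs_minus_cancel abs_one)
    moreover have "\<bar>relu' (x \<bullet> w$s) - relu' (x \<bullet> v$s)\<bar> = (if s \<in> ?F then 1 else 0)"
      by (auto simp: activation_flips_def relu'_def)
    ultimately have "(norm ((net_grad a x w - net_grad a x v)$s))\<^sup>2
        = (if s \<in> ?F then 1 / ?m else 0) * (norm x)\<^sup>2"
      by (simp add: power_mult_distrib abs_mult power_divide)
    also have "\<dots> \<le> (if s \<in> ?F then 1 / ?m else 0)"
      using assms(2) by (simp add: mult_left_le power_le_one)
    finally show ?thesis .
  qed
  have "(norm (net_grad a x w - net_grad a x v))\<^sup>2 \<le> (\<Sum>s\<in>UNIV. if s \<in> ?F then 1 / ?m else 0)"
    by (subst norm_vec_power2_eq_sum) (intro sum_mono block)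
  also have "\<dots> = real (card ?F) / ?m"
    by (simp add: sum.If_cases)
  finally show ?thesis
    by (rule real_le_rsqrt)
qed

lemma lin_err_eq_sum:
  "lin_err a x w v = (\<Sum>s\<in>UNIV. a s / sqrt (real CARD('m))
     * (relu (x \<bullet> w$s) - relu (x \<bullet> v$s) - relu' (x \<bullet> v$s) * (x \<bullet> w$s - x \<bullet> v$s)))"
  for a :: "'m::finite \<Rightarrow> real"
  unfolding lin_err_def net_def net_grad_def inner_vec_def
  by (simp add: sum_distrib_left sum_subtractf[symmetric] inner_diff_right algebra_simps diff_divide_distrib)

lemma abs_lin_err_le:
  fixes x :: "real^'d::finite" and a :: "'m::finite \<Rightarrow> real" and w v :: "real^'d^'m"
  assumes "\<forall>s. a s = 1 \<or> a s = -1" and "norm x \<le> 1"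
  shows "\<bar>lin_err a x w v\<bar>
    \<le> sqrt (real (card (activation_flips x w v)) / real CARD('m)) * norm (w - v)"
proof -
  let ?F = "activation_flips x w v" and ?m = "real CARD('m)"
  have "\<bar>a s\<bar> = 1" for s
    using assms(1) by (metis abs_minus_cancel abs_one)
  have summand: "\<bar>relu (x \<bullet> w$s) - relu (x \<bullet> v$s) - relu' (x \<bullet> v$s) * (x \<bullet> w$s - x \<bullet> v$s)\<bar>
      \<le> (if s \<in> ?F then norm ((w - v)$s) else 0)" for s
  proof -
    have "\<bar>x \<bullet> w$s - x \<bullet> v$s\<bar> \<le> norm x * norm ((w - v)$s)"
      using Cauchy_Schwarz_ineq2[of x "(w - v)$s"] by (simp add: inner_diff_right)
    also have "\<dots> \<le> norm ((w - v)$s)"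
      using assms(2) by (simp add: mult_left_le_one_le)
    finally show ?thesis
      using abs_relu_linearization_le[of "x \<bullet> w$s" "x \<bullet> v$s"] by (auto simp: activation_flips_def)
  qed
  have "\<bar>lin_err a x w v\<bar> \<le> (\<Sum>s\<in>UNIV. 1 / sqrt ?m * (if s \<in> ?F then norm ((w - v)$s) else 0))"
    unfolding lin_err_eq_sum using \<open>\<And>s. \<bar>a s\<bar> = 1\<close> summand
    by (intro order_trans[OF sum_abs] sum_mono)
      (simp add: abs_mult divide_right_mono del: divide_const_simps)
  also have "\<dots> = 1 / sqrt ?m * (\<Sum>s\<in>?F. norm ((w - v)$s))"
    unfolding sum_distrib_left[symmetric] by (simp add: sum.If_cases)
  also have "\<dots> \<le> 1 / sqrt ?m * (sqrt (real (card ?F)) * norm (w - v))"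
    by (intro mult_left_mono sum_norm_vec_le) simp
  also have "\<dots> = sqrt (real (card ?F) / ?m) * norm (w - v)"
    by (simp add: real_sqrt_divide)
  finally show ?thesis .
qed

lemma sqrt_flip_budget_le:
  fixes r q l :: real
  assumes "r > 0" and "q \<ge> 1" and "l \<ge> 0"
  shows "sqrt ((q^6 * (r\<^sup>2/q\<^sup>2) + q^3 * l\<^sup>2 / sqrt 2 + 2 * (r^3)\<^sup>2 / (r\<^sup>2/q\<^sup>2)\<^sup>2) / q^6) \<le> (3*r + l) / q"
proof -
  have "q > 0" using assms by simp
  have small: "q^3 * l\<^sup>2 / sqrt 2 / q^6 \<le> l\<^sup>2 / q\<^sup>2"
  proof -
    have "q^3 * l\<^sup>2 / sqrt 2 / q^6 = l\<^sup>2 / (sqrt 2 * q^3)"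
      using \<open>q > 0\<close> by (simp add: field_simps)
    also have "\<dots> \<le> l\<^sup>2 / q\<^sup>2"
    proof (rule divide_left_mono)
      have "q\<^sup>2 \<le> q^3" using assms by (simp add: power_increasing)
      also have "\<dots> \<le> sqrt 2 * q^3" using \<open>q > 0\<close> by simp
      finally show "q\<^sup>2 \<le> sqrt 2 * q^3" .
    qed (use \<open>q > 0\<close> in auto)
    finally show ?thesis .
  qed
  have "q^6 * (r\<^sup>2/q\<^sup>2) / q^6 = r\<^sup>2/q\<^sup>2"
    using \<open>q > 0\<close> by (intro nonzero_mult_div_cancel_left) simp
  moreover have "2 * (r^3)\<^sup>2 / (r\<^sup>2/q\<^sup>2)\<^sup>2 / q^6 = 2 * (r\<^sup>2/q\<^sup>2)"
    using \<open>q > 0\<close> \<open>r > 0\<close> by (simp add: field_simps)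
  ultimately have "(q^6 * (r\<^sup>2/q\<^sup>2) + q^3 * l\<^sup>2 / sqrt 2 + 2 * (r^3)\<^sup>2 / (r\<^sup>2/q\<^sup>2)\<^sup>2) / q^6
      \<le> (3 * r\<^sup>2 + l\<^sup>2) / q\<^sup>2"
    using small by (simp add: add_divide_distrib)
  also have "\<dots> \<le> (3*r + l)\<^sup>2 / q\<^sup>2"
    using assms by (intro divide_right_mono) (simp_all add: power2_eq_square algebra_simps)
  finally show ?thesis
    using assms by (intro real_le_lsqrt) (auto simp: power_divide)
qed

lemma sqrt_flip_budget_le_powr:
  fixes R m L :: real
  assumes "R > 0" and "m \<ge> 1" and "L \<ge> 0"
  defines "\<tau> \<equiv> R powr (2/3) / m powr (1/3)"
  shows "sqrt ((m * \<tau> + sqrt (m * L / 2) + 2 * R\<^sup>2 / \<tau>\<^sup>2) / m)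
    \<le> (3 * R powr (1/3) + L powr (1/4)) / m powr (1/6)"
proof -
  define r q l where "r = R powr (1/3)" and "q = m powr (1/6)" and "l = L powr (1/4)"
  have root: "(y powr a) ^ n = y powr (a * real n)" if "y \<ge> 0" "n \<noteq> 0" for y a :: real and n :: nat
    using that by (simp add: powr_realpow'[symmetric] powr_powr)
  have R: "R = r^3" and m: "m = q^6" and "R powr (2/3) = r\<^sup>2" "m powr (1/3) = q\<^sup>2"
    using assms root[where y=R and a="1/3" and n=3] root[where y=m and a="1/6" and n=6]
      root[where y=R and a="1/3" and n=2] root[where y=m and a="1/6" and n=2]
    by (simp_all add: r_def q_def)
  then have \<tau>: "\<tau> = r\<^sup>2/q\<^sup>2"
    by (simp add: \<tau>_def)
  have \<epsilon>: "sqrt (m * L / 2) = q^3 * l\<^sup>2 / sqrt 2"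
    using assms root[where y=m and a="1/6" and n=3] root[where y=L and a="1/4" and n=2]
    by (simp add: q_def l_def real_sqrt_divide real_sqrt_mult powr_half_sqrt)
  have "r > 0" "q \<ge> 1" "l \<ge> 0"
    using assms by (auto simp: r_def q_def l_def ge_one_powr_ge_zero)
  then show ?thesis
    unfolding \<tau> \<epsilon> r_def[symmetric] q_def[symmetric] l_def[symmetric] unfolding m R
    by (rule sqrt_flip_budget_le)
qed

lemma activation_flips_whp:
  fixes x :: "nat \<Rightarrow> real^'d::finite"
  assumes "\<tau> > 0" and "\<epsilon> \<ge> 0"
  shows "\<exists>A \<in> sets (gauss_init :: (real^'d^'m::finite) measure).
     measure gauss_init A \<ge> 1 - real n * exp (- 2 * \<epsilon>\<^sup>2 / real CARD('m)) \<and>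
     (\<forall>w0\<in>A. \<forall>w v. dist w w0 \<le> R \<longrightarrow> dist v w0 \<le> R \<longrightarrow> (\<forall>i<n.
        real (card (activation_flips (x i) w v)) \<le> real CARD('m) * \<tau> + \<epsilon> + 2 * R\<^sup>2 / \<tau>\<^sup>2))"
proof -
  obtain A :: "(real^'d^'m) set" where A: "A \<in> sets gauss_init"
      "measure gauss_init A \<ge> 1 - real n * exp (- 2 * \<epsilon>\<^sup>2 / real CARD('m))"
    and few_near: "\<forall>w0\<in>A. \<forall>i<n. x i \<noteq> 0 \<longrightarrow> real (card (near_boundary (x i) \<tau> w0)) < real CARD('m) * \<tau> + \<epsilon>"
    using near_boundary_whp[OF less_imp_le[OF \<open>\<tau> > 0\<close>] \<open>\<epsilon> \<ge> 0\<close>, of n x] by blast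
  have "real (card (activation_flips (x i) w v)) \<le> real CARD('m) * \<tau> + \<epsilon> + 2 * R\<^sup>2 / \<tau>\<^sup>2"
    if "w0 \<in> A" "dist w w0 \<le> R" "dist v w0 \<le> R" "i < n" for w0 w v :: "real^'d^'m" and i
  proof (cases "x i = 0")
    case True
    then show ?thesis
      using assms by simp
  next
    case False
    then show ?thesis
      using card_activation_flips_le[OF \<open>\<tau> > 0\<close> that(2,3), of "x i"] few_near that(1,4) by force
  qed
  with A show ?thesis by blast
qed

lemma net_local_bounds:
  fixes x :: "real^'d::finite" and a :: "'m::finite \<Rightarrow> real" and w v :: "real^'d^'m"
  assumes "\<forall>s. a s = 1 \<or> a s = -1" and "norm x \<le> 1"
    and B: "sqrt (real (card (activation_flips x w v)) / real CARD('m)) \<le> B"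
  shows "\<bar>lin_err a x w v\<bar> \<le> B * norm (w - v)"
    and "norm (net_grad a x w - net_grad a x v) \<le> B"
proof -
  have "\<bar>lin_err a x w v\<bar> \<le> sqrt (real (card (activation_flips x w v)) / real CARD('m)) * norm (w - v)"
    by (rule abs_lin_err_le[OF assms(1,2)])
  also have "\<dots> \<le> B * norm (w - v)"
    using B by (rule mult_right_mono) simp
  finally show "\<bar>lin_err a x w v\<bar> \<le> B * norm (w - v)" .
  show "norm (net_grad a x w - net_grad a x v) \<le> B"
    using norm_net_grad_diff_le[OF assms(1,2)] B by (rule order_trans)
qed

theorem mainTheorem20:
  fixes x :: "nat \<Rightarrow> real^'d" and n :: nat
    and a :: "'m::finite \<Rightarrow> real" and R \<delta> :: real
  assumes x_norm: "\<forall>i<n. norm (x i) \<le> 1"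
    and a_sign: "\<forall>s. a s = 1 \<or> a s = -1"
    and R_pos: "R > 0"
    and delta: "0 < \<delta>" "\<delta> < 1"
  shows "\<exists>A \<in> sets (gauss_init :: (real^'d^'m) measure).
     measure gauss_init A \<ge> 1 - \<delta> \<and>
     (\<forall>w0\<in>A. \<forall>w v. dist w w0 \<le> R \<longrightarrow> dist v w0 \<le> R \<longrightarrow>
        (\<forall>i<n.
          \<bar>lin_err a (x i) w v\<bar>
            \<le> (3 * R powr (1/3) + ln (real n / \<delta>) powr (1/4)) / real CARD('m) powr (1/6)
               * norm (w - v)
        \<and> norm (net_grad a (x i) w - net_grad a (x i) v)
            \<le> (3 * R powr (1/3) + ln (real n / \<delta>) powr (1/4)) / real CARD('m) powr (1/6)))"
proof -
  define m L where "m = real CARD('m)" and "L = ln (real n / \<delta>)"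
  define \<tau> \<epsilon> where "\<tau> = R powr (2/3) / m powr (1/3)" and "\<epsilon> = sqrt (m * L / 2)"
  define B where "B = (3 * R powr (1/3) + L powr (1/4)) / m powr (1/6)"
  have "m \<ge> 1" "\<tau> > 0"
    using R_pos by (simp_all add: m_def \<tau>_def)
  have "L \<ge> 0" \<comment> \<open>for \<open>n = 0\<close> this uses \<open>ln 0 = 0\<close>\<close>
    using delta by (cases "n = 0") (simp_all add: L_def)
  with \<open>m \<ge> 1\<close> have "\<epsilon> \<ge> 0" and budget: "real n * exp (- 2 * \<epsilon>\<^sup>2 / m) \<le> \<delta>"
    using delta by (cases "n = 0"; simp add: \<epsilon>_def L_def exp_minus exp_diff)+
  have "sqrt ((m * \<tau> + \<epsilon> + 2 * R\<^sup>2 / \<tau>\<^sup>2) / m) \<le> B"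
    unfolding B_def \<tau>_def \<epsilon>_def using R_pos \<open>m \<ge> 1\<close> \<open>L \<ge> 0\<close> by (rule sqrt_flip_budget_le_powr)
  then have few_flips: "sqrt (real k / m) \<le> B" if "real k \<le> m * \<tau> + \<epsilon> + 2 * R\<^sup>2 / \<tau>\<^sup>2" for k
    using that \<open>m \<ge> 1\<close> by (smt (verit) divide_right_mono real_sqrt_le_mono)
  obtain A :: "(real^'d^'m) set" where A: "A \<in> sets gauss_init"
      "measure gauss_init A \<ge> 1 - real n * exp (- 2 * \<epsilon>\<^sup>2 / m)"
    and flips: "\<forall>w0\<in>A. \<forall>w v. dist w w0 \<le> R \<longrightarrow> dist v w0 \<le> R \<longrightarrow>
       (\<forall>i<n. real (card (activation_flips (x i) w v)) \<le> m * \<tau> + \<epsilon> + 2 * R\<^sup>2 / \<tau>\<^sup>2)"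
    using activation_flips_whp[OF \<open>\<tau> > 0\<close> \<open>\<epsilon> \<ge> 0\<close>, where n=n and x=x and R=R and 'm='m, folded m_def]
    by blast
  show ?thesis
    unfolding m_def[symmetric] L_def[symmetric] B_def[symmetric]
  proof (intro bexI[OF _ A(1)] conjI ballI allI impI)
    show "1 - \<delta> \<le> measure gauss_init A"
      using A(2) budget by linarith
    fix w0 w v :: "real^'d^'m" and i
    assume "w0 \<in> A" "dist w w0 \<le> R" "dist v w0 \<le> R" "i < n"
    then have "sqrt (real (card (activation_flips (x i) w v)) / real CARD('m)) \<le> B"
      using flips few_flips unfolding m_def by blast
    then show "\<bar>lin_err a (x i) w v\<bar> \<le> B * norm (w - v)"
      and "norm (net_grad a (x i) w - net_grad a (x i) v) \<le> B"
      using net_local_bounds a_sign x_norm \<open>i < n\<close> by blast+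
  qed
qed

end
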